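(* Let $d\ge1$, $P\subseteq\mathbb R\times[d]$, $k\in[d]$ and $n$ a positive integer. If $n$ sets $\mathcal D=\{C_1,\dots,C_n\}\subseteq\mathcal C_{\equiv}(P)$ $k$-intersect, then there is a subfamily $\mathcal D'\subseteq\mathcal D$ with $|\mathcal D'|\le 2d-k$ such that $f(\bigcap\mathcal D)=f(\bigcap\mathcal D')$.
   Context: $[d]=\{1,\dots,d\}$. A (separated) $d$-interval is a set $I=\bigcup_{i\in[d]}\{(x,i): x\in I^{(i)}\}\subseteq\mathbb R\times[d]$ with each $I^{(i)}\subseteq\mathbb R$ convex (possibly empty); for any set $C\subseteq\mathbb R\times[d]$ write $C^{(i)}=\{x\in\mathbb R:(x,i)\in C\}$ for its $i$-th level, and points $(x,i)$ lie in the $i$-th level. For $P\subseteq\mathbb R\times[d]$, $\mathcal C_{\equiv}(P)=\{I\cap P: I \text{ a } d\text{-interval}\}$. A collection of sets of $\mathcal C_{\equiv}(P)$ $k$-intersects if its intersection contains at least $k$ points of $P$ lying in $k$ distinct levels. Let $\hat{\mathcal C}_{\equiv}(P)$ be the set of all intersections $\bigcap\mathcal C$ of finite $k$-intersecting subfamilies $\mathcal C\subseteq\mathcal C_{\equiv}(P)$, and define $f:\hat{\mathcal C}_{\equiv}(P)\to(\mathbb R\cup\{-\infty,+\infty\})^d$ by $f(\hat C)=(x_1,\dots,x_d)$ with $x_i=\sup\hat C^{(i)}$ if $\hat C^{(i)}\ne\emptyset$ and $x_i=-\infty$ if $\hat C^{(i)}=\emptyset$. *)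

theory Defs
  imports "HOL-Analysis.Analysis"
begin

definition level :: "(real \<times> nat) set \<Rightarrow> nat \<Rightarrow> real set" where
  "level C i = {x. (x, i) \<in> C}"

definition d_interval :: "nat \<Rightarrow> (real \<times> nat) set \<Rightarrow> bool" where
  "d_interval d I \<longleftrightarrow> I \<subseteq> UNIV \<times> {1..d} \<and> (\<forall>i\<in>{1..d}. convex (level I i))"

definition C_equiv :: "nat \<Rightarrow> (real \<times> nat) set \<Rightarrow> (real \<times> nat) set set" where
  "C_equiv d P = {I \<inter> P | I. d_interval d I}"

definition k_intersects :: "nat \<Rightarrow> (real \<times> nat) set \<Rightarrow> (real \<times> nat) set set \<Rightarrow> bool" where
  "k_intersects k P \<C> \<longleftrightarrow>
     (\<exists>S. S \<subseteq> \<Inter>\<C> \<inter> P \<and> finite S \<and> card S = k \<and> inj_on snd S)"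

text \<open>The map f; coordinates indexed by \<open>i \<in> {1..d}\<close> (value \<open>-\<infinity>\<close> outside, irrelevant).\<close>
definition f_sup :: "nat \<Rightarrow> (real \<times> nat) set \<Rightarrow> nat \<Rightarrow> ereal" where
  "f_sup d C = (\<lambda>i. if i \<in> {1..d} \<and> level C i \<noteq> {} then Sup (ereal ` level C i) else -\<infinity>)"

end

theory Submission
  imports Defs
begin

text \<open>
  Write each \<open>C j\<close> as \<open>I j \<inter> P\<close> with \<open>I j\<close> a d-interval, and look at one level at a time.
  On a level, choose the member \<open>b\<close> whose interval reaches least far to the right; it
  alone cuts the intersection off from above, so whenever that level of the intersection is
  nonempty, adding \<open>b\<close> to a subfamily already pins down the supremum.  On a level where the
  intersection is empty, the member \<open>a\<close> reaching least far to the left is added as well: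
  a point of both \<open>I a\<close> and \<open>I b\<close> would lie in every interval, so the subfamily intersection
  stays empty there.  This uses one index per level plus one per empty level, and the
  \<open>k\<close> points in distinct levels leave at most \<open>d - k\<close> empty levels.
\<close>

lemma ex_dominated_member:
  fixes R :: "'a \<Rightarrow> 'a \<Rightarrow> bool" and K :: "'i \<Rightarrow> 'a set"
  assumes total: "\<And>x y. R x y \<or> R y x" and trans: "\<And>x y z. R x y \<Longrightarrow> R y z \<Longrightarrow> R x z"
    and "finite J" "J \<noteq> {}"
  shows "\<exists>b\<in>J. \<forall>j\<in>J. \<forall>y\<in>K b. \<exists>z\<in>K j. R y z"
  using \<open>finite J\<close> \<open>J \<noteq> {}\<close>
proof (induction J rule: finite_ne_induct)
  case (singleton j)
  show ?case using total by auto
next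
  case (insert x F)
  then obtain b where b: "b \<in> F" "\<forall>j\<in>F. \<forall>y\<in>K b. \<exists>z\<in>K j. R y z" by blast
  show ?case
  proof (cases "\<forall>y\<in>K b. \<exists>z\<in>K x. R y z")
    case True
    then show ?thesis using b by auto
  next
    case False
    then obtain y0 where y0: "y0 \<in> K b" "\<forall>z\<in>K x. R z y0" using total by blast
    have "\<exists>z\<in>K j. R y z" if "j \<in> insert x F" "y \<in> K x" for j y
    proof (cases "j = x")
      case True
      then show ?thesis using \<open>y \<in> K x\<close> total by blast
    next
      case False
      then obtain z where "z \<in> K j" "R y0 z" using b(2) y0(1) \<open>j \<in> insert x F\<close> by blast
      then show ?thesis using trans y0(2) \<open>y \<in> K x\<close> by blast
    qed
    then show ?thesis by blast
  qed
qed

lemma convex_real_Inter_memI: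
  fixes K :: "'i \<Rightarrow> real set"
  assumes "\<forall>j\<in>J. convex (K j)"
    and "\<forall>j\<in>J. \<exists>u\<in>K j. u \<le> y" and "\<forall>j\<in>J. \<exists>v\<in>K j. y \<le> v"
  shows "y \<in> \<Inter>(K ` J)"
proof
  fix j assume "j \<in> J"
  then obtain u v where "u \<in> K j" "u \<le> y" "v \<in> K j" "y \<le> v" using assms(2,3) by blast
  moreover have "is_interval (K j)" using assms(1) \<open>j \<in> J\<close> is_interval_convex_1 by blast
  ultimately show "y \<in> K j" unfolding is_interval_1 by blast
qed

lemma convex_real_Inter_cofinal_subfamily:
  fixes K :: "'i \<Rightarrow> real set" and Q :: "real set"
  assumes conv: "\<forall>j\<in>J. convex (K j)"
    and a: "\<forall>j\<in>J. \<forall>y\<in>K a. \<exists>z\<in>K j. z \<le> y"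
    and b: "\<forall>j\<in>J. \<forall>y\<in>K b. \<exists>z\<in>K j. y \<le> z"
    and "b \<in> A" "A \<subseteq> J" and a_mem: "Q \<inter> \<Inter>(K ` J) = {} \<Longrightarrow> a \<in> A"
  shows "\<forall>y\<in>Q \<inter> \<Inter>(K ` A). \<exists>p\<in>Q \<inter> \<Inter>(K ` J). y \<le> p"
proof
  fix y assume y: "y \<in> Q \<inter> \<Inter>(K ` A)"
  show "\<exists>p\<in>Q \<inter> \<Inter>(K ` J). y \<le> p"
  proof (rule ccontr)
    assume no_upper: "\<not> (\<exists>p\<in>Q \<inter> \<Inter>(K ` J). y \<le> p)"
    have below: "\<forall>j\<in>J. \<exists>u\<in>K j. u \<le> y"
    proof (cases "Q \<inter> \<Inter>(K ` J) = {}")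
      case True
      then have "y \<in> K a" using a_mem y by blast
      then show ?thesis using a by blast
    next
      case False
      then obtain p where p: "p \<in> Q \<inter> \<Inter>(K ` J)" by blast
      then have "\<not> y \<le> p" using no_upper by blast
      then have "p \<le> y" by linarith
      then show ?thesis using p by blast
    qed
    have "y \<in> K b" using y \<open>b \<in> A\<close> by blast
    then have above: "\<forall>j\<in>J. \<exists>v\<in>K j. y \<le> v" using b by blast
    have "y \<in> Q \<inter> \<Inter>(K ` J)"
      using convex_real_Inter_memI [OF conv below above] y by blast
    then show False using no_upper by blast
  qed
qed

lemma level_Int_Inter: "level (P \<inter> \<Inter>(I ` A)) i = level P i \<inter> (\<Inter>j\<in>A. level (I j) i)"
  unfolding level_def by auto

lemma f_sup_eq_if_cofinal:
  assumes "X \<subseteq> Y" and cofinal: "\<forall>i\<in>{1..d}. \<forall>y\<in>level Y i. \<exists>p\<in>level X i. y \<le> p"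
  shows "f_sup d X = f_sup d Y"
proof
  fix i
  have sub: "level X i \<subseteq> level Y i" using \<open>X \<subseteq> Y\<close> unfolding level_def by auto
  show "f_sup d X i = f_sup d Y i"
  proof (cases "i \<in> {1..d}")
    case True
    then have "level X i = {} \<longleftrightarrow> level Y i = {}" using sub cofinal by blast
    moreover have "Sup (ereal ` level X i) = Sup (ereal ` level Y i)"
    proof (rule SUP_eq)
      show "\<exists>y\<in>level Y i. ereal x \<le> ereal y" if "x \<in> level X i" for x
        using that sub by auto
      show "\<exists>x\<in>level X i. ereal y \<le> ereal x" if "y \<in> level Y i" for y
        using that cofinal True by auto
    qed
    ultimately show ?thesis unfolding f_sup_def by simp
  qed (auto simp: f_sup_def)
qed

lemma k_intersects_card_nonempty_levels:
  assumes "k_intersects k P \<C>" and "P \<subseteq> UNIV \<times> {1..d}"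
  shows "k \<le> card {i\<in>{1..d}. level (\<Inter>\<C>) i \<noteq> {}}"
proof -
  obtain S where S: "S \<subseteq> \<Inter>\<C> \<inter> P" "finite S" "card S = k" "inj_on snd S"
    using assms(1) unfolding k_intersects_def by blast
  have "snd ` S \<subseteq> {i\<in>{1..d}. level (\<Inter>\<C>) i \<noteq> {}}"
  proof
    fix i assume "i \<in> snd ` S"
    then obtain x where "(x, i) \<in> S" by force
    then have "(x, i) \<in> \<Inter>\<C>" "(x, i) \<in> P" using S(1) by auto
    then show "i \<in> {i\<in>{1..d}. level (\<Inter>\<C>) i \<noteq> {}}"
      using assms(2) unfolding level_def by blast
  qed
  then show ?thesis using S card_inj_on_le [of snd S] by simp
qed

lemma f_sup_Inter_d_intervals_subfamily:
  fixes I :: "'j \<Rightarrow> (real \<times> nat) set"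
  assumes "d \<ge> 1" "finite J" "J \<noteq> {}" and I: "\<forall>j\<in>J. d_interval d (I j)"
  shows "\<exists>T\<subseteq>J. T \<noteq> {} \<and> card T \<le> 2 * d - card {i\<in>{1..d}. level (P \<inter> \<Inter>(I ` J)) i \<noteq> {}} \<and>
           f_sup d (P \<inter> \<Inter>(I ` J)) = f_sup d (P \<inter> \<Inter>(I ` T))"
proof -
  have "\<exists>a\<in>J. \<forall>j\<in>J. \<forall>y\<in>level (I a) i. \<exists>z\<in>level (I j) i. z \<le> y" for i
    by (rule ex_dominated_member [where R = "\<lambda>x y. y \<le> x"]) (use assms(2,3) in auto)
  then obtain a where a: "\<And>i. a i \<in> J"
      "\<And>i. \<forall>j\<in>J. \<forall>y\<in>level (I (a i)) i. \<exists>z\<in>level (I j) i. z \<le> y"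
    by metis
  have "\<exists>b\<in>J. \<forall>j\<in>J. \<forall>y\<in>level (I b) i. \<exists>z\<in>level (I j) i. y \<le> z" for i
    by (rule ex_dominated_member [where R = "(\<le>)"]) (use assms(2,3) in auto)
  then obtain b where b: "\<And>i. b i \<in> J"
      "\<And>i. \<forall>j\<in>J. \<forall>y\<in>level (I (b i)) i. \<exists>z\<in>level (I j) i. y \<le> z"
    by metis
  define N where "N = {i\<in>{1..d}. level (P \<inter> \<Inter>(I ` J)) i \<noteq> {}}"
  define E where "E = {1..d} - N"
  define T where "T = a ` E \<union> b ` {1..d}"
  have "N \<subseteq> {1..d}" unfolding N_def by blast
  then have "finite N" using finite_subset by blast
  then have "card E = d - card N"
    unfolding E_def using card_Diff_subset [OF _ \<open>N \<subseteq> {1..d}\<close>] by simp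
  have "card N \<le> d" using card_mono [OF _ \<open>N \<subseteq> {1..d}\<close>] by simp
  have "card T \<le> card (a ` E) + card (b ` {1..d})" unfolding T_def by (rule card_Un_le)
  also have "\<dots> \<le> card E + d" using card_image_le [of E a] card_image_le [of "{1..d}" b]
    unfolding E_def by simp
  finally have "card T \<le> 2 * d - card N" using \<open>card E = d - card N\<close> \<open>card N \<le> d\<close> by linarith
  moreover have "T \<subseteq> J" "T \<noteq> {}" unfolding T_def using a(1) b(1) \<open>d \<ge> 1\<close> by auto
  moreover have "f_sup d (P \<inter> \<Inter>(I ` J)) = f_sup d (P \<inter> \<Inter>(I ` T))"
  proof (rule f_sup_eq_if_cofinal)
    show "P \<inter> \<Inter>(I ` J) \<subseteq> P \<inter> \<Inter>(I ` T)" using \<open>T \<subseteq> J\<close> by blast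
    show "\<forall>i\<in>{1..d}. \<forall>y\<in>level (P \<inter> \<Inter>(I ` T)) i. \<exists>p\<in>level (P \<inter> \<Inter>(I ` J)) i. y \<le> p"
    proof
      fix i assume i: "i \<in> {1..d}"
      have conv: "\<forall>j\<in>J. convex (level (I j) i)" using I i unfolding d_interval_def by blast
      have bT: "b i \<in> T" using i unfolding T_def by blast
      have aT: "a i \<in> T" if "level P i \<inter> (\<Inter>j\<in>J. level (I j) i) = {}"
        using i that unfolding T_def E_def N_def level_Int_Inter by blast
      show "\<forall>y\<in>level (P \<inter> \<Inter>(I ` T)) i. \<exists>p\<in>level (P \<inter> \<Inter>(I ` J)) i. y \<le> p"
        unfolding level_Int_Inter
        using convex_real_Inter_cofinal_subfamily [where K = "\<lambda>j. level (I j) i" and Q = "level P i",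
            OF conv a(2) b(2) bT \<open>T \<subseteq> J\<close> aT] .
    qed
  qed
  ultimately show ?thesis unfolding N_def by blast
qed

theorem lemma5:
  fixes d k n :: nat and P :: "(real \<times> nat) set" and C :: "nat \<Rightarrow> (real \<times> nat) set"
  assumes "d \<ge> 1"
    and "P \<subseteq> UNIV \<times> {1..d}"
    and "k \<in> {1..d}"
    and "n \<ge> 1"
    and "\<forall>j\<in>{1..n}. C j \<in> C_equiv d P"
    and "k_intersects k P (C ` {1..n})"
  shows "\<exists>D'. D' \<subseteq> C ` {1..n} \<and> D' \<noteq> {} \<and> card D' \<le> 2 * d - k \<and>
             f_sup d (\<Inter>(C ` {1..n})) = f_sup d (\<Inter>D')"
proof -
  have "\<forall>j\<in>{1..n}. \<exists>J'. d_interval d J' \<and> C j = J' \<inter> P"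
    using assms(5) unfolding C_equiv_def by blast
  then obtain I where I: "\<forall>j\<in>{1..n}. d_interval d (I j) \<and> C j = I j \<inter> P"
    by (rule bchoice [THEN exE])
  have Inter_C: "P \<inter> \<Inter>(I ` A) = \<Inter>(C ` A)" if "A \<subseteq> {1..n}" "A \<noteq> {}" for A
    using I that by auto
  have "{1..n} \<noteq> {}" "\<forall>j\<in>{1..n}. d_interval d (I j)" using assms(4) I by auto
  from f_sup_Inter_d_intervals_subfamily [OF assms(1) finite_atLeastAtMost this]
  obtain T where T: "T \<subseteq> {1..n}" "T \<noteq> {}"
      "card T \<le> 2 * d - card {i\<in>{1..d}. level (P \<inter> \<Inter>(I ` {1..n})) i \<noteq> {}}"
      "f_sup d (P \<inter> \<Inter>(I ` {1..n})) = f_sup d (P \<inter> \<Inter>(I ` T))"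
    by blast
  note Inter_C [OF order_refl \<open>{1..n} \<noteq> {}\<close>] Inter_C [OF T(1,2)]
  moreover have "k \<le> card {i\<in>{1..d}. level (\<Inter>(C ` {1..n})) i \<noteq> {}}"
    using k_intersects_card_nonempty_levels [OF assms(6,2)] .
  moreover have "card (C ` T) \<le> card T" using T(1) card_image_le finite_subset by blast
  ultimately show ?thesis using T by (intro exI [of _ "C ` T"]) auto
qed

end
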